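(* Let $G$ be a graph with at least two vertices and let $u$ be a universal vertex of $G$. Then $\tilde\gamma_{gr}^{\times 2}(G)=\tilde\gamma_{gr}^{\times 2}(G-u)+a(G-u)$ (where, since $G$ has no isolated vertices, $\tilde\gamma_{gr}^{\times 2}(G)=\gamma_{gr}^{\times 2}(G)$). Moreover, if $a(G-u)=0$, every GDDS of $G-u$ is a GDDS of $G$; and if $a(G-u)=1$ and $S$ is an MDNS of $G-u$, then $S\oplus(u)$ is an MDNS of $G$.
   Context: Graphs are finite, simple, undirected; $N[v]$ is the closed neighborhood; $u$ is universal if $N[u]=V(G)$. A sequence $S=(v_1,\dots,v_k)$ of distinct vertices of $G$ is a double neighborhood sequence (DNS) if for each $i$ some $u\in N[v_i]$ satisfies $|\{j<i: u\in N[v_j]\}|\le 1$. A maximum double neighborhood sequence (MDNS) is a DNS of maximum length, and $\tilde\gamma_{gr}^{\times 2}(G)$ denotes this length. A double dominating sequence (DDS) is a DNS whose vertex set $D$ satisfies $|N[w]\cap D|\ge 2$ for all $w$; for graphs without isolated vertices a Grundy double dominating sequence (GDDS) is a DDS of maximum length, of length $\gamma_{gr}^{\times 2}(G)$. $a(G)=1$ if $G$ has an isolated vertex and $a(G)=0$ otherwise. $S\oplus(u)$ denotes the sequence $S$ followed by $u$. *)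

theory Defs
  imports Main
begin

text \<open>A graph is given by a finite vertex set V and a symmetric irreflexive
adjacency relation E; only edges between vertices of V count.
The graph G - u is (V - {u}, E).\<close>

definition graph :: "'a set \<Rightarrow> ('a \<Rightarrow> 'a \<Rightarrow> bool) \<Rightarrow> bool" where
  "graph V E \<longleftrightarrow> finite V \<and> (\<forall>x. \<not> E x x) \<and> (\<forall>x y. E x y \<longrightarrow> E y x)"

definition cnbh :: "'a set \<Rightarrow> ('a \<Rightarrow> 'a \<Rightarrow> bool) \<Rightarrow> 'a \<Rightarrow> 'a set" where
  "cnbh V E v = {w \<in> V. w = v \<or> E v w}"

definition universal :: "'a set \<Rightarrow> ('a \<Rightarrow> 'a \<Rightarrow> bool) \<Rightarrow> 'a \<Rightarrow> bool" where
  "universal V E u \<longleftrightarrow> u \<in> V \<and> cnbh V E u = V"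

definition is_DNS :: "'a set \<Rightarrow> ('a \<Rightarrow> 'a \<Rightarrow> bool) \<Rightarrow> 'a list \<Rightarrow> bool" where
  "is_DNS V E S \<longleftrightarrow> distinct S \<and> set S \<subseteq> V \<and>
     (\<forall>i < length S. \<exists>x \<in> cnbh V E (S ! i).
        card {j. j < i \<and> x \<in> cnbh V E (S ! j)} \<le> 1)"

definition is_MDNS :: "'a set \<Rightarrow> ('a \<Rightarrow> 'a \<Rightarrow> bool) \<Rightarrow> 'a list \<Rightarrow> bool" where
  "is_MDNS V E S \<longleftrightarrow> is_DNS V E S \<and> (\<forall>T. is_DNS V E T \<longrightarrow> length T \<le> length S)"

definition tgr2 :: "'a set \<Rightarrow> ('a \<Rightarrow> 'a \<Rightarrow> bool) \<Rightarrow> nat" where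
  "tgr2 V E = Max {length S | S. is_DNS V E S}"

definition is_DDS :: "'a set \<Rightarrow> ('a \<Rightarrow> 'a \<Rightarrow> bool) \<Rightarrow> 'a list \<Rightarrow> bool" where
  "is_DDS V E S \<longleftrightarrow> is_DNS V E S \<and> (\<forall>w \<in> V. card (cnbh V E w \<inter> set S) \<ge> 2)"

definition is_GDDS :: "'a set \<Rightarrow> ('a \<Rightarrow> 'a \<Rightarrow> bool) \<Rightarrow> 'a list \<Rightarrow> bool" where
  "is_GDDS V E S \<longleftrightarrow> is_DDS V E S \<and> (\<forall>T. is_DDS V E T \<longrightarrow> length T \<le> length S)"

definition gr2 :: "'a set \<Rightarrow> ('a \<Rightarrow> 'a \<Rightarrow> bool) \<Rightarrow> nat" where
  "gr2 V E = Max {length S | S. is_DDS V E S}"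

definition isol :: "'a set \<Rightarrow> ('a \<Rightarrow> 'a \<Rightarrow> bool) \<Rightarrow> nat" where
  "isol V E = (if \<exists>v \<in> V. cnbh V E v = {v} then 1 else 0)"

end

theory Submission
  imports Defs
begin

text \<open>
  Closed neighbourhoods in \<open>G - u\<close> are those of \<open>G\<close> minus \<open>u\<close>, so a DNS of \<open>G - u\<close> is one of
  \<open>G\<close>. Conversely, deleting the universal vertex \<open>u\<close> from a DNS \<open>S\<close> of \<open>G\<close> leaves a DNS of
  \<open>G - u\<close>; and if \<open>u \<in> S\<close>, the vertex footprinted by the last entry of \<open>S\<close> is dominated at
  most once by \<open>S - u\<close> in \<open>G - u\<close>. Without isolated vertices such a vertex always allows the
  sequence to be extended, so \<open>|S| \<le> tgr2 (G - u)\<close>; if \<open>G - u\<close> has an isolated vertex \<open>w\<close>,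
  then \<open>u\<close> can be appended to any DNS of \<open>G - u\<close>, footprinting \<open>w\<close>. The same extension
  argument shows that in a graph without isolated vertices every MDNS is a DDS, whence
  MDNS and GDDS coincide and \<open>tgr2 = gr2\<close>.
\<close>

lemma cnbh_subset: "cnbh V E x \<subseteq> V"
  by (auto simp: cnbh_def)

lemma cnbh_self: "x \<in> V \<Longrightarrow> x \<in> cnbh V E x"
  by (simp add: cnbh_def)

lemma cnbh_sym:
  "graph V E \<Longrightarrow> x \<in> V \<Longrightarrow> y \<in> V \<Longrightarrow> x \<in> cnbh V E y \<longleftrightarrow> y \<in> cnbh V E x"
  by (auto simp: graph_def cnbh_def)

lemma cnbh_Diff: "cnbh (V - {u}) E v = cnbh V E v - {u}"
  by (auto simp: cnbh_def)

lemma universal_in_cnbh: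
  assumes "graph V E" "universal V E u" "x \<in> V"
  shows "u \<in> cnbh V E x"
  using assms cnbh_sym[of V E u x] by (auto simp: universal_def)

lemma card_indices_in_cnbh:
  assumes "graph V E" "distinct T" "set T \<subseteq> V" "x \<in> V"
  shows "card {j. j < length T \<and> x \<in> cnbh V E (T ! j)} = card (cnbh V E x \<inter> set T)"
proof -
  have "inj_on (nth T) {j. j < length T \<and> x \<in> cnbh V E (T ! j)}"
    using assms(2) by (simp add: inj_on_nth)
  moreover have "nth T ` {j. j < length T \<and> x \<in> cnbh V E (T ! j)} = {y \<in> set T. x \<in> cnbh V E y}"
    by (auto simp: in_set_conv_nth)
  moreover have "{y \<in> set T. x \<in> cnbh V E y} = cnbh V E x \<inter> set T"
    using assms(1,3,4) cnbh_sym[of V E x] by auto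
  ultimately show ?thesis
    by (metis card_image)
qed

lemma is_DNS_Nil: "is_DNS V E []"
  by (simp add: is_DNS_def)

lemma is_DNS_snoc_iff:
  assumes "graph V E"
  shows "is_DNS V E (T @ [w]) \<longleftrightarrow> is_DNS V E T \<and> w \<notin> set T \<and> w \<in> V \<and>
    (\<exists>x \<in> cnbh V E w. card (cnbh V E x \<inter> set T) \<le> 1)"
proof (cases "distinct T \<and> set T \<subseteq> V")
  case True
  have "card {j. j < length T \<and> x \<in> cnbh V E ((T @ [w]) ! j)} = card (cnbh V E x \<inter> set T)"
    if "x \<in> cnbh V E w" for x
    using card_indices_in_cnbh[OF assms, of T x] True that cnbh_subset[of V E w]
    by (auto simp: nth_append cong: conj_cong)
  moreover have "{j. j < i \<and> x \<in> cnbh V E ((T @ [w]) ! j)} = {j. j < i \<and> x \<in> cnbh V E (T ! j)}"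
    if "i < length T" for i x
    using that by (auto simp: nth_append)
  ultimately show ?thesis
    unfolding is_DNS_def by (auto simp: All_less_Suc nth_append)
next
  case False
  then show ?thesis
    unfolding is_DNS_def by auto
qed

lemma is_DNS_length_le_card: "is_DNS V E S \<Longrightarrow> finite V \<Longrightarrow> length S \<le> card V"
  unfolding is_DNS_def by (metis card_mono distinct_card)

lemma
  assumes "graph V E"
  shows is_DNS_length_le_tgr2: "is_DNS V E S \<Longrightarrow> length S \<le> tgr2 V E"
    and ex_is_DNS_length_tgr2: "\<exists>S. is_DNS V E S \<and> length S = tgr2 V E"
proof -
  let ?L = "{length S | S. is_DNS V E S}"
  have "?L \<subseteq> {..card V}"
    using assms is_DNS_length_le_card by (auto simp: graph_def)
  then have "finite ?L"
    by (rule finite_subset) simp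
  moreover have "?L \<noteq> {}"
    using is_DNS_Nil by blast
  ultimately have "tgr2 V E \<in> ?L"
    unfolding tgr2_def by (rule Max_in)
  then show "\<exists>S. is_DNS V E S \<and> length S = tgr2 V E"
    by auto
  show "is_DNS V E S \<Longrightarrow> length S \<le> tgr2 V E"
    unfolding tgr2_def using \<open>finite ?L\<close> by (auto intro: Max_ge)
qed

lemma is_MDNS_iff:
  assumes "graph V E"
  shows "is_MDNS V E S \<longleftrightarrow> is_DNS V E S \<and> length S = tgr2 V E"
proof -
  obtain M where "is_DNS V E M" "length M = tgr2 V E"
    using ex_is_DNS_length_tgr2[OF assms] by blast
  then show ?thesis
    unfolding is_MDNS_def using is_DNS_length_le_tgr2[OF assms] by (metis le_antisym)
qed

lemma is_DNS_extend:
  assumes g: "graph V E" and "isol V E = 0" and T: "is_DNS V E T"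
    and z: "z \<in> V" and sparse: "card (cnbh V E z \<inter> set T) \<le> 1"
  obtains w where "is_DNS V E (T @ [w])"
proof -
  have "cnbh V E z \<noteq> {z}"
    using assms(2) z by (auto simp: isol_def split: if_splits)
  then obtain y where y: "y \<in> cnbh V E z" "y \<noteq> z"
    using cnbh_self[OF z] by blast
  have "\<not> {z, y} \<subseteq> set T"
  proof
    assume "{z, y} \<subseteq> set T"
    then have "card {z, y} \<le> card (cnbh V E z \<inter> set T)"
      using y cnbh_self[OF z] by (intro card_mono) auto
    with sparse y(2) show False by simp
  qed
  then obtain w where w: "w \<in> {z, y}" "w \<notin> set T"
    by blast
  have "w \<in> cnbh V E z"
    using w(1) y(1) cnbh_self[OF z] by blast
  then have "w \<in> V"
    using cnbh_subset[of V E z] by blast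
  then have "z \<in> cnbh V E w"
    using cnbh_sym[OF g z] \<open>w \<in> cnbh V E z\<close> by simp
  then have "is_DNS V E (T @ [w])"
    using is_DNS_snoc_iff[OF g] T w(2) \<open>w \<in> V\<close> sparse by blast
  then show thesis ..
qed

lemma is_MDNS_imp_is_DDS:
  assumes g: "graph V E" and "isol V E = 0" and S: "is_MDNS V E S"
  shows "is_DDS V E S"
  unfolding is_DDS_def
proof (intro conjI ballI)
  show "is_DNS V E S"
    using S by (simp add: is_MDNS_def)
  fix w assume "w \<in> V"
  show "2 \<le> card (cnbh V E w \<inter> set S)"
  proof (rule ccontr)
    assume "\<not> ?thesis"
    then obtain x where "is_DNS V E (S @ [x])"
      using is_DNS_extend[OF g assms(2) \<open>is_DNS V E S\<close> \<open>w \<in> V\<close>] by force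
    with S show False
      by (force simp: is_MDNS_def)
  qed
qed

lemma is_MDNS_imp_is_GDDS:
  "graph V E \<Longrightarrow> isol V E = 0 \<Longrightarrow> is_MDNS V E S \<Longrightarrow> is_GDDS V E S"
  using is_MDNS_imp_is_DDS by (fastforce simp: is_GDDS_def is_DDS_def is_MDNS_def)

lemma is_GDDS_imp_is_MDNS:
  assumes g: "graph V E" and "isol V E = 0" and S: "is_GDDS V E S"
  shows "is_MDNS V E S"
proof -
  obtain M where "is_MDNS V E M"
    using ex_is_DNS_length_tgr2[OF g] is_MDNS_iff[OF g] by blast
  then have "length M \<le> length S"
    using S is_MDNS_imp_is_DDS[OF g assms(2)] by (simp add: is_GDDS_def)
  with \<open>is_MDNS V E M\<close> S show ?thesis
    by (auto simp: is_MDNS_def is_GDDS_def is_DDS_def)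
qed

lemma gr2_eq_tgr2:
  assumes g: "graph V E" and "isol V E = 0"
  shows "gr2 V E = tgr2 V E"
proof -
  obtain M where M: "is_DNS V E M" "length M = tgr2 V E"
    using ex_is_DNS_length_tgr2[OF g] by blast
  then have "is_GDDS V E M"
    using is_MDNS_imp_is_GDDS[OF g assms(2)] is_MDNS_iff[OF g] by blast
  then have "Max {length S | S. is_DDS V E S} = length M"
    by (intro Max_eqI) (auto simp: is_GDDS_def finite_nat_set_iff_bounded_le)
  with M(2) show ?thesis
    by (simp add: gr2_def)
qed

lemma graph_Diff: "graph V E \<Longrightarrow> graph (V - {u}) E"
  by (simp add: graph_def)

lemma isol_eq_0_or_1: "isol V E = 0 \<or> isol V E = 1"
  by (simp add: isol_def)

lemma isol_eq_0_if_universal: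
  assumes g: "graph V E" and un: "universal V E u" and ne: "V - {u} \<noteq> {}"
  shows "isol V E = 0"
proof -
  have "cnbh V E v \<noteq> {v}" if v: "v \<in> V" for v
  proof (cases "v = u")
    case True
    with un ne show ?thesis
      by (auto simp: universal_def)
  next
    case False
    with universal_in_cnbh[OF g un v] show ?thesis
      by auto
  qed
  then show ?thesis
    by (simp add: isol_def)
qed

lemma is_DNS_lift_Diff:
  assumes S: "is_DNS (V - {u}) E S"
  shows "is_DNS V E S"
  unfolding is_DNS_def
proof (intro conjI allI impI)
  show "distinct S" "set S \<subseteq> V"
    using S by (auto simp: is_DNS_def)
  fix i assume "i < length S"
  then obtain x where x: "x \<in> cnbh (V - {u}) E (S ! i)"
      "card {j. j < i \<and> x \<in> cnbh (V - {u}) E (S ! j)} \<le> 1"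
    using S unfolding is_DNS_def by blast
  then have "x \<noteq> u" "x \<in> cnbh V E (S ! i)"
    by (auto simp: cnbh_Diff)
  with x(2) show "\<exists>x \<in> cnbh V E (S ! i). card {j. j < i \<and> x \<in> cnbh V E (S ! j)} \<le> 1"
    by (auto simp: cnbh_Diff)
qed

lemma is_DNS_removeAll_universal:
  assumes g: "graph V E" and un: "universal V E u"
  shows "is_DNS V E S \<Longrightarrow> is_DNS (V - {u}) E (removeAll u S)"
proof (induction S rule: rev_induct)
  case Nil
  show ?case
    by (simp add: is_DNS_Nil)
next
  case (snoc w T)
  have T: "is_DNS V E T" "w \<notin> set T" "w \<in> V"
    and "\<exists>x \<in> cnbh V E w. card (cnbh V E x \<inter> set T) \<le> 1"
    using snoc.prems by (simp_all add: is_DNS_snoc_iff[OF g])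
  then obtain x where x: "x \<in> cnbh V E w" "card (cnbh V E x \<inter> set T) \<le> 1"
    by blast
  have IH: "is_DNS (V - {u}) E (removeAll u T)"
    using snoc.IH[OF T(1)] .
  show ?case
  proof (cases "w = u")
    case True
    with IH show ?thesis
      by simp
  next
    case w: False
    have "\<exists>y \<in> cnbh (V - {u}) E w. card (cnbh (V - {u}) E y \<inter> set (removeAll u T)) \<le> 1"
    proof (cases "x = u")
      case True
      \<comment> \<open>\<open>u\<close> sees all of \<open>T\<close>, so \<open>|T| \<le> 1\<close> and \<open>w\<close> footprints itself in \<open>G - u\<close>\<close>
      have "cnbh V E u \<inter> set T = set T"
        using un T(1) by (auto simp: universal_def is_DNS_def)
      with x True have "card (set T) \<le> 1"
        by simp
      moreover have "card (cnbh (V - {u}) E w \<inter> set (removeAll u T)) \<le> card (set T)"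
        by (intro card_mono) auto
      moreover have "w \<in> cnbh (V - {u}) E w"
        using w T(3) by (simp add: cnbh_def)
      ultimately show ?thesis
        by (meson le_trans)
    next
      case False
      have "card (cnbh (V - {u}) E x \<inter> set (removeAll u T)) \<le> card (cnbh V E x \<inter> set T)"
        by (intro card_mono) (auto simp: cnbh_Diff)
      moreover have "x \<in> cnbh (V - {u}) E w"
        using x False by (simp add: cnbh_Diff)
      ultimately show ?thesis
        using x(2) by (meson le_trans)
    qed
    with IH T(2,3) w show ?thesis
      by (simp add: is_DNS_snoc_iff[OF graph_Diff[OF g]])
  qed
qed

lemma is_DNS_with_universal_imp_sparse_vertex:
  assumes g: "graph V E" and un: "universal V E u" and S: "is_DNS V E S"
    and uS: "u \<in> set S" and ne: "V - {u} \<noteq> {}"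
  obtains z where "z \<in> V - {u}" "card (cnbh (V - {u}) E z \<inter> set (removeAll u S)) \<le> 1"
proof -
  obtain T w where Tw: "S = T @ [w]"
    using uS by (cases S rule: rev_exhaust) auto
  then have T: "is_DNS V E T" "w \<notin> set T" "w \<in> V"
    and "\<exists>x \<in> cnbh V E w. card (cnbh V E x \<inter> set T) \<le> 1"
    using S by (simp_all add: is_DNS_snoc_iff[OF g])
  then obtain x where x: "x \<in> cnbh V E w" "card (cnbh V E x \<inter> set T) \<le> 1"
    by blast
  let ?A = "cnbh V E x \<inter> set T"
  \<comment> \<open>\<open>x\<close> sees \<open>u\<close>, so if \<open>u\<close> comes before \<open>w\<close> then \<open>?A = {u}\<close>\<close>
  have "x \<in> V"
    using x(1) cnbh_subset[of V E w] by blast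
  have sparse: "card (insert w ?A - {u}) \<le> 1"
  proof (cases "w = u")
    case True
    then have "card (insert w ?A - {u}) \<le> card ?A"
      by (intro card_mono) auto
    with x(2) show ?thesis
      by linarith
  next
    case False
    with uS Tw universal_in_cnbh[OF g un \<open>x \<in> V\<close>] have "u \<in> ?A"
      by simp
    with x(2) have "?A = {u}"
      by (auto simp: card_le_Suc0_iff_eq)
    with False show ?thesis
      by simp
  qed
  have "\<exists>z \<in> V - {u}. cnbh (V - {u}) E z \<inter> set (removeAll u S) \<subseteq> insert w ?A - {u}"
  proof (cases "x = u")
    case True
    have "?A = set T"
      using True un T(1) by (auto simp: universal_def is_DNS_def)
    with ne Tw show ?thesis
      by auto
  next
    case False
    with \<open>x \<in> V\<close> Tw show ?thesis
      by (auto simp: cnbh_Diff)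
  qed
  then obtain z where "z \<in> V - {u}"
      "cnbh (V - {u}) E z \<inter> set (removeAll u S) \<subseteq> insert w ?A - {u}"
    by blast
  then have "card (cnbh (V - {u}) E z \<inter> set (removeAll u S)) \<le> card (insert w ?A - {u})"
    by (intro card_mono) auto
  with sparse \<open>z \<in> V - {u}\<close> show thesis
    using that by simp
qed

lemma is_DNS_snoc_universal:
  assumes g: "graph V E" and un: "universal V E u" and S: "is_DNS (V - {u}) E S"
    and "isol (V - {u}) E = 1"
  shows "is_DNS V E (S @ [u])"
proof -
  obtain w where w: "w \<in> V - {u}" "cnbh (V - {u}) E w = {w}"
    using assms(4) by (auto simp: isol_def split: if_splits)
  have "u \<notin> set S"
    using S by (auto simp: is_DNS_def)
  with w(2) have "cnbh V E w \<inter> set S \<subseteq> {w}"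
    by (auto simp: cnbh_Diff)
  then have "card (cnbh V E w \<inter> set S) \<le> card {w}"
    by (intro card_mono) auto
  moreover have "w \<in> cnbh V E u" "u \<in> V"
    using un w(1) by (auto simp: universal_def)
  ultimately show ?thesis
    using is_DNS_lift_Diff[OF S] \<open>u \<notin> set S\<close> by (auto simp: is_DNS_snoc_iff[OF g])
qed

lemma is_DNS_length_le_Diff_universal:
  assumes g: "graph V E" and un: "universal V E u" and ne: "V - {u} \<noteq> {}"
    and S: "is_DNS V E S"
  shows "length S \<le> tgr2 (V - {u}) E + isol (V - {u}) E"
proof -
  have g': "graph (V - {u}) E"
    using g by (rule graph_Diff)
  have S': "is_DNS (V - {u}) E (removeAll u S)"
    using is_DNS_removeAll_universal[OF g un S] .
  show ?thesis
  proof (cases "u \<in> set S")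
    case False
    with S' is_DNS_length_le_tgr2[OF g'] show ?thesis
      by fastforce
  next
    case True
    have "distinct S"
      using S by (simp add: is_DNS_def)
    with True have len: "length S = length (removeAll u S) + 1"
      using length_pos_if_in_set[OF True]
      by (simp add: distinct_remove1_removeAll[symmetric] length_remove1)
    consider "isol (V - {u}) E = 1" | "isol (V - {u}) E = 0"
      using isol_eq_0_or_1[of "V - {u}" E] by auto
    then show ?thesis
    proof cases
      case 1
      with len is_DNS_length_le_tgr2[OF g' S'] show ?thesis
        by simp
    next
      case 2
      obtain z where "z \<in> V - {u}" "card (cnbh (V - {u}) E z \<inter> set (removeAll u S)) \<le> 1"
        using is_DNS_with_universal_imp_sparse_vertex[OF g un S True ne] .
      then obtain w where "is_DNS (V - {u}) E (removeAll u S @ [w])"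
        using is_DNS_extend[OF g' 2 S'] by blast
      with len 2 is_DNS_length_le_tgr2[OF g'] show ?thesis
        by fastforce
    qed
  qed
qed

lemma tgr2_Diff_universal:
  assumes g: "graph V E" and un: "universal V E u" and ne: "V - {u} \<noteq> {}"
  shows "tgr2 V E = tgr2 (V - {u}) E + isol (V - {u}) E"
proof (rule antisym)
  obtain M where "is_DNS V E M" "length M = tgr2 V E"
    using ex_is_DNS_length_tgr2[OF g] by blast
  with is_DNS_length_le_Diff_universal[OF g un ne]
  show "tgr2 V E \<le> tgr2 (V - {u}) E + isol (V - {u}) E"
    by fastforce
  obtain M' where M': "is_DNS (V - {u}) E M'" "length M' = tgr2 (V - {u}) E"
    using ex_is_DNS_length_tgr2[OF graph_Diff[OF g]] by blast
  consider "isol (V - {u}) E = 0" | "isol (V - {u}) E = 1"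
    using isol_eq_0_or_1[of "V - {u}" E] by auto
  then show "tgr2 (V - {u}) E + isol (V - {u}) E \<le> tgr2 V E"
  proof cases
    case 1
    with M' is_DNS_length_le_tgr2[OF g is_DNS_lift_Diff] show ?thesis
      by fastforce
  next
    case 2
    with M' is_DNS_length_le_tgr2[OF g is_DNS_snoc_universal[OF g un M'(1)]] show ?thesis
      by simp
  qed
qed

lemma is_MDNS_lift_Diff_universal:
  assumes g: "graph V E" and un: "universal V E u" and ne: "V - {u} \<noteq> {}"
    and "isol (V - {u}) E = 0" and S: "is_MDNS (V - {u}) E S"
  shows "is_MDNS V E S"
  using S is_DNS_lift_Diff[of V u E S] tgr2_Diff_universal[OF g un ne] assms(4)
  by (simp add: is_MDNS_iff[OF g] is_MDNS_iff[OF graph_Diff[OF g]])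

lemma is_MDNS_snoc_universal:
  assumes g: "graph V E" and un: "universal V E u" and ne: "V - {u} \<noteq> {}"
    and "isol (V - {u}) E = 1" and S: "is_MDNS (V - {u}) E S"
  shows "is_MDNS V E (S @ [u])"
  using S is_DNS_snoc_universal[OF g un _ assms(4), of S] tgr2_Diff_universal[OF g un ne] assms(4)
  by (simp add: is_MDNS_iff[OF g] is_MDNS_iff[OF graph_Diff[OF g]])

theorem proposition4:
  fixes V :: "'a set" and E :: "'a \<Rightarrow> 'a \<Rightarrow> bool" and u :: 'a
  assumes "graph V E" and "card V \<ge> 2" and "universal V E u"
  shows "tgr2 V E = tgr2 (V - {u}) E + isol (V - {u}) E
    \<and> tgr2 V E = gr2 V E
    \<and> (isol (V - {u}) E = 0 \<longrightarrow>
         (\<forall>S. is_GDDS (V - {u}) E S \<longrightarrow> is_GDDS V E S))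
    \<and> (isol (V - {u}) E = 1 \<longrightarrow>
         (\<forall>S. is_MDNS (V - {u}) E S \<longrightarrow> is_MDNS V E (S @ [u])))"
proof -
  note g = assms(1) and un = assms(3)
  have ne: "V - {u} \<noteq> {}"
  proof
    assume "V - {u} = {}"
    then have "card V \<le> card {u}"
      by (intro card_mono) auto
    with assms(2) show False
      by simp
  qed
  have isol_G: "isol V E = 0"
    using isol_eq_0_if_universal[OF g un ne] .
  have "is_GDDS V E S" if "isol (V - {u}) E = 0" "is_GDDS (V - {u}) E S" for S
    using that is_GDDS_imp_is_MDNS[OF graph_Diff[OF g]] is_MDNS_lift_Diff_universal[OF g un ne]
      is_MDNS_imp_is_GDDS[OF g isol_G] by blast
  then show ?thesis
    using tgr2_Diff_universal[OF g un ne] gr2_eq_tgr2[OF g isol_G]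
      is_MDNS_snoc_universal[OF g un ne] by simp
qed

end
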